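(* Let $\alpha$ be a reduced operation sequence of size $n$ producing the permutation $\pi$. Then the set of elements produced by the peaks of $\alpha$ equals the set of right-to-left maxima of $\pi$, i.e. the set of entries $\pi_j$ such that $\pi_j>\pi_k$ for all $k>j$.
   Context: Operation sequences: $\sigma[a]$ ($a\ge1$) denotes pushing the top $a$ elements of the input stack, as a block with relative order unchanged, onto the top of a working stack; $\tau[b]$ ($b\ge1$) denotes moving the top $b$ elements of the working stack, as a block with relative order unchanged, onto the top of an output stack; $\sigma=\sigma[1]$, $\tau=\tau[1]$. A well-formed operation sequence is a word $\alpha=\alpha_1\cdots\alpha_m$ in these symbols such that in every prefix the total push size is at least the total pop size, with equality for the whole word; its size $n$ is the total push size. Acting on an input stack containing $1,2,\dots,n$ with $1$ on top, it produces the permutation $\pi=\pi_1\cdots\pi_n$ obtained by reading the final output stack from top to bottom. $\alpha$ is reduced if every consecutive pair $\alpha_i\alpha_{i+1}$ with $\alpha_i$ a push and $\alpha_{i+1}$ a pop equals $\sigma[1]\tau[1]$. Such a pair in a reduced sequence is a peak, and the element pushed by $\alpha_i$ (equivalently popped by $\alpha_{i+1}$) is the element produced by that peak. *)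

theory Defs
  imports Main
begin

datatype op = Push nat | Pop nat

fun push_size :: "op \<Rightarrow> nat" where
  "push_size (Push a) = a" | "push_size (Pop b) = 0"

fun pop_size :: "op \<Rightarrow> nat" where
  "pop_size (Push a) = 0" | "pop_size (Pop b) = b"

definition total_push :: "op list \<Rightarrow> nat" where
  "total_push xs = sum_list (map push_size xs)"

definition total_pop :: "op list \<Rightarrow> nat" where
  "total_pop xs = sum_list (map pop_size xs)"

definition well_formed :: "op list \<Rightarrow> bool" where
  "well_formed xs \<longleftrightarrow>
     (\<forall>x \<in> set xs. case x of Push a \<Rightarrow> a \<ge> 1 | Pop b \<Rightarrow> b \<ge> 1) \<and>
     (\<forall>i \<le> length xs. total_pop (take i xs) \<le> total_push (take i xs)) \<and>
     total_pop xs = total_push xs"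

definition op_size :: "op list \<Rightarrow> nat" where
  "op_size xs = total_push xs"

text \<open>States: (input stack, working stack, output stack), lists with head = top.\<close>
type_synonym state = "nat list \<times> nat list \<times> nat list"

fun step :: "state \<Rightarrow> op \<Rightarrow> state" where
  "step (inp, wrk, out) (Push a) = (drop a inp, take a inp @ wrk, out)"
| "step (inp, wrk, out) (Pop b) = (inp, drop b wrk, take b wrk @ out)"

definition exec :: "op list \<Rightarrow> state \<Rightarrow> state" where
  "exec xs s = foldl step s xs"

definition init_state :: "nat \<Rightarrow> state" where
  "init_state n = ([1..<n+1], [], [])"

text \<open>The permutation produced: final output stack read top to bottom.\<close>
definition produced :: "op list \<Rightarrow> nat list" where
  "produced xs = snd (snd (exec xs (init_state (op_size xs))))"

definition is_push :: "op \<Rightarrow> bool" where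
  "is_push x \<longleftrightarrow> (\<exists>a. x = Push a)"

definition is_pop :: "op \<Rightarrow> bool" where
  "is_pop x \<longleftrightarrow> (\<exists>b. x = Pop b)"

definition reduced :: "op list \<Rightarrow> bool" where
  "reduced xs \<longleftrightarrow> (\<forall>i. Suc i < length xs \<longrightarrow> is_push (xs ! i) \<longrightarrow> is_pop (xs ! Suc i)
       \<longrightarrow> xs ! i = Push 1 \<and> xs ! Suc i = Pop 1)"

text \<open>Element produced by the peak at position i: the element pushed by xs!i,
  i.e. the top of the input stack just before step i.\<close>
definition peak_elements :: "op list \<Rightarrow> nat set" where
  "peak_elements xs = {hd (fst (exec (take i xs) (init_state (op_size xs)))) | i.
       Suc i < length xs \<and> xs ! i = Push 1 \<and> xs ! Suc i = Pop 1}"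

definition rl_maxima :: "nat list \<Rightarrow> nat set" where
  "rl_maxima p = {p ! j | j. j < length p \<and> (\<forall>k. j < k \<and> k < length p \<longrightarrow> p ! k < p ! j)}"

end

(* The input stack always holds the not yet pushed elements c, c+1, ..., n, all of them larger
   than everything on the work and output stacks.  So the element c produced by a peak is
   larger than the whole output stack at the moment it is output; since later pops only add
   elements in front of it, c is a right-to-left maximum of the result.
   Conversely, let x be a right-to-left maximum, moved to the output stack by the pop at step t.
   The last push before t is followed by a pop, so in a reduced sequence it is a peak, producing
   some c.  If that pop is step t itself, x = c.  Otherwise x lay below c on the work stack, so
   x < c, while c was output before x and hence follows x in the permutation, contradicting
   maximality. *)

theory Submission
  imports Defs "HOL-Library.Sublist"
begin

abbreviation input_stack :: "state \<Rightarrow> nat list" where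
  "input_stack s \<equiv> fst s"

abbreviation work_stack :: "state \<Rightarrow> nat list" where
  "work_stack s \<equiv> fst (snd s)"

abbreviation output_stack :: "state \<Rightarrow> nat list" where
  "output_stack s \<equiv> snd (snd s)"

lemma exec_Nil [simp]: "exec [] s = s"
  by (simp add: exec_def)

lemma exec_Cons [simp]: "exec (x # xs) s = exec xs (step s x)"
  by (simp add: exec_def)

lemma exec_append: "exec (xs @ ys) s = exec ys (exec xs s)"
  by (simp add: exec_def)

lemma suffix_output_exec: "suffix (output_stack s) (output_stack (exec xs s))"
proof (induction xs arbitrary: s)
  case (Cons x xs)
  have "suffix (output_stack s) (output_stack (step s x))"
    by (cases s; cases x) (auto simp: suffix_def)
  with Cons.IH[of "step s x"] show ?case
    by (simp add: suffix_order.trans)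
qed simp

lemma work_exec_pops_subset:
  "\<forall>x \<in> set xs. is_pop x \<Longrightarrow> set (work_stack (exec xs s)) \<subseteq> set (work_stack s)"
proof (induction xs arbitrary: s)
  case (Cons x xs)
  then obtain b where "x = Pop b"
    by (auto simp: is_pop_def)
  then have "set (work_stack (step s x)) \<subseteq> set (work_stack s)"
    by (cases s) (auto dest: in_set_dropD)
  moreover have "set (work_stack (exec xs (step s x))) \<subseteq> set (work_stack (step s x))"
    using Cons by simp
  ultimately show ?case
    by simp
qed simp

lemma distinct_drop_take_swap:
  assumes "distinct (xs @ ys @ zs)"
  shows "distinct (xs @ drop n ys @ take n ys @ zs)"
proof -
  have "set (take n ys) \<inter> set (drop n ys) = {}"
    using assms by (metis append_take_drop_id distinct_append)
  with assms show ?thesis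
    by (auto simp: distinct_append dest: in_set_takeD in_set_dropD)
qed

lemma exec_init_state_invariant:
  assumes "exec xs (init_state N) = (inp, wrk, out)"
  shows "inp = [Suc (total_push xs)..<Suc N] \<and> (\<forall>z \<in> set wrk \<union> set out. z \<le> total_push xs)
    \<and> distinct (inp @ wrk @ out)"
  using assms
proof (induction xs arbitrary: inp wrk out rule: rev_induct)
  case Nil
  then show ?case
    by (auto simp: init_state_def total_push_def)
next
  case (snoc x xs)
  obtain inp0 wrk0 out0 where s0: "exec xs (init_state N) = (inp0, wrk0, out0)"
    by (cases "exec xs (init_state N)")
  let ?p = "total_push xs"
  have inp0: "inp0 = [Suc ?p..<Suc N]"
    and le0: "\<forall>z \<in> set wrk0 \<union> set out0. z \<le> ?p"
    and dist0: "distinct (inp0 @ wrk0 @ out0)"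
    using snoc.IH[OF s0] by blast+
  show ?case
  proof (cases x)
    case (Push a)
    have st: "inp = drop a inp0" "wrk = take a inp0 @ wrk0" "out = out0"
      using snoc.prems s0 Push by (simp_all add: exec_append)
    have "z \<le> ?p + a" if "z \<in> set (take a inp0)" for z
      using that inp0 by (auto simp: in_set_conv_nth simp del: upt_Suc)
    then have "\<forall>z \<in> set wrk \<union> set out. z \<le> ?p + a"
      using st le0 by force
    moreover have "inp = [Suc (?p + a)..<Suc N]"
      using st inp0 by (simp add: drop_upt del: upt_Suc)
    moreover have "distinct (inp @ wrk @ out)"
      using distinct_drop_take_swap[of "[]" inp0 "wrk0 @ out0" a] dist0 st by simp
    moreover have "total_push (xs @ [x]) = ?p + a"
      by (simp add: total_push_def Push)
    ultimately show ?thesis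
      by simp
  next
    case (Pop b)
    have st: "inp = inp0" "wrk = drop b wrk0" "out = take b wrk0 @ out0"
      using snoc.prems s0 Pop by (simp_all add: exec_append)
    then have "\<forall>z \<in> set wrk \<union> set out. z \<le> ?p"
      using le0 by (auto dest: in_set_takeD in_set_dropD)
    moreover have "distinct (inp @ wrk @ out)"
      using distinct_drop_take_swap[of inp0 wrk0 out0 b] dist0 st by simp
    moreover have "total_push (xs @ [x]) = ?p"
      by (simp add: total_push_def Pop)
    ultimately show ?thesis
      using st inp0 by simp
  qed
qed

lemma is_pop_iff_not_push: "is_pop x \<longleftrightarrow> \<not> is_push x"
  by (cases x) (auto simp: is_push_def is_pop_def)

lemma total_push_take_le: "total_push (take i al) \<le> op_size al"
proof -
  have "op_size al = total_push (take i al) + total_push (drop i al)"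
    by (metis append_take_drop_id op_size_def sum_list_append map_append total_push_def)
  then show ?thesis
    by simp
qed

definition state_at :: "op list \<Rightarrow> nat \<Rightarrow> state" where
  "state_at al i = exec (take i al) (init_state (op_size al))"

lemma state_at_0: "state_at al 0 = ([1..<Suc (op_size al)], [], [])"
  by (simp add: state_at_def init_state_def)

lemma state_at_Suc: "i < length al \<Longrightarrow> state_at al (Suc i) = step (state_at al i) (al ! i)"
  by (simp add: state_at_def take_Suc_conv_app_nth exec_append)

lemma state_at_add: "state_at al (s + d) = exec (take d (drop s al)) (state_at al s)"
  by (simp add: state_at_def take_add exec_append)

lemma produced_state_at: "produced al = output_stack (state_at al (length al))"
  by (simp add: state_at_def produced_def)

lemma state_at_invariant:
  assumes "state_at al i = (inp, wrk, out)"
  shows "inp = [Suc (total_push (take i al))..<Suc (op_size al)]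
    \<and> (\<forall>z \<in> set wrk \<union> set out. z \<le> total_push (take i al)) \<and> distinct (inp @ wrk @ out)"
  using exec_init_state_invariant assms unfolding state_at_def by blast

lemma distinct_produced: "distinct (produced al)"
  using state_at_invariant[of al "length al"]
  by (cases "state_at al (length al)") (auto simp: produced_state_at)

lemma suffix_output_state_at:
  assumes "s \<le> t"
  shows "suffix (output_stack (state_at al s)) (output_stack (state_at al t))"
proof -
  obtain d where "t = s + d"
    using assms le_Suc_ex by blast
  then show ?thesis
    by (simp add: state_at_add suffix_output_exec)
qed

lemma work_state_at_pops_subset:
  assumes "s \<le> t" and "t \<le> length al" and "\<forall>k. s \<le> k \<and> k < t \<longrightarrow> is_pop (al ! k)"
  shows "set (work_stack (state_at al t)) \<subseteq> set (work_stack (state_at al s))"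
proof -
  obtain d where t: "t = s + d"
    using assms(1) le_Suc_ex by blast
  have "\<forall>x \<in> set (take d (drop s al)). is_pop x"
    using assms t by (auto simp: in_set_conv_nth)
  then show ?thesis
    by (simp add: t state_at_add work_exec_pops_subset)
qed

definition peak :: "op list \<Rightarrow> nat \<Rightarrow> bool" where
  "peak al i \<longleftrightarrow> Suc i < length al \<and> al ! i = Push 1 \<and> al ! Suc i = Pop 1"

lemma peak_elements_state_at:
  "peak_elements al = {hd (input_stack (state_at al i)) | i. peak al i}"
  by (simp add: peak_elements_def peak_def state_at_def)

lemma peak_state:
  assumes "peak al i" and "state_at al i = (inp, wrk, out)"
  obtains c inp' where "inp = c # inp'"
    and "state_at al (Suc i) = (inp', c # wrk, out)"
    and "state_at al (Suc (Suc i)) = (inp', wrk, c # out)"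
    and "\<forall>z \<in> set wrk \<union> set out. z < c"
proof -
  let ?p = "total_push (take i al)"
  have inp: "inp = [Suc ?p..<Suc (op_size al)]" and small: "\<forall>z \<in> set wrk \<union> set out. z \<le> ?p"
    using state_at_invariant[OF assms(2)] by blast+
  have "total_push (take (Suc i) al) = Suc ?p"
    using assms(1) by (simp add: peak_def take_Suc_conv_app_nth total_push_def)
  then have "Suc ?p < Suc (op_size al)"
    using total_push_take_le[of "Suc i" al] by simp
  then have inp_Cons: "inp = Suc ?p # [Suc (Suc ?p)..<Suc (op_size al)]"
    using inp upt_conv_Cons by (simp del: upt_Suc)
  have "state_at al (Suc i) = ([Suc (Suc ?p)..<Suc (op_size al)], Suc ?p # wrk, out)"
    using assms inp_Cons state_at_Suc[of i al] by (simp add: peak_def)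
  moreover from this
  have "state_at al (Suc (Suc i)) = ([Suc (Suc ?p)..<Suc (op_size al)], wrk, Suc ?p # out)"
    using assms state_at_Suc[of "Suc i" al] by (simp add: peak_def)
  ultimately show thesis
    using that inp_Cons small by (simp add: le_imp_less_Suc)
qed

lemma rl_maxima_conv_split:
  "rl_maxima p = {x. \<exists>ys zs. p = ys @ x # zs \<and> (\<forall>z \<in> set zs. z < x)}"
proof (intro set_eqI iffI)
  fix x
  assume "x \<in> rl_maxima p"
  then obtain j where j: "j < length p" "x = p ! j"
    and later: "\<forall>k. j < k \<and> k < length p \<longrightarrow> p ! k < p ! j"
    by (auto simp: rl_maxima_def)
  have "p = take j p @ x # drop (Suc j) p"
    using j by (simp add: id_take_nth_drop)
  moreover have "\<forall>z \<in> set (drop (Suc j) p). z < x"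
    using later j by (auto simp: in_set_conv_nth)
  ultimately show "x \<in> {x. \<exists>ys zs. p = ys @ x # zs \<and> (\<forall>z \<in> set zs. z < x)}"
    by blast
next
  fix x
  assume "x \<in> {x. \<exists>ys zs. p = ys @ x # zs \<and> (\<forall>z \<in> set zs. z < x)}"
  then obtain ys zs where p: "p = ys @ x # zs" and smaller: "\<forall>z \<in> set zs. z < x"
    by blast
  have "p ! k < x" if k: "length ys < k" "k < length p" for k
  proof -
    have "p ! k = zs ! (k - Suc (length ys))" and "k - Suc (length ys) < length zs"
      using p k by (auto simp: nth_append nth_Cons')
    then show ?thesis
      using smaller by simp
  qed
  then show "x \<in> rl_maxima p"
    unfolding rl_maxima_def using p by (intro CollectI exI[of _ "length ys"]) auto
qed

lemma rl_maxima_later_smaller: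
  assumes "distinct (xs @ ys)" and "x \<in> set xs" and "y \<in> set ys" and "x \<in> rl_maxima (xs @ ys)"
  shows "y < x"
proof -
  obtain us zs where split: "xs @ ys = us @ x # zs" and smaller: "\<forall>z \<in> set zs. z < x"
    using assms(4) unfolding rl_maxima_conv_split by blast
  obtain vs ws where xs: "xs = vs @ x # ws"
    using assms(2) by (meson split_list)
  have "x \<notin> set vs" and "x \<notin> set (ws @ ys)"
    using assms(1) xs by auto
  then have "zs = ws @ ys"
    using split xs append_Cons_eq_iff[of x vs "ws @ ys" us zs] by simp
  with smaller assms(3) show ?thesis
    by simp
qed

lemma peak_element_in_rl_maxima:
  assumes "peak al i"
  shows "hd (input_stack (state_at al i)) \<in> rl_maxima (produced al)"
proof -
  obtain inp wrk out where s: "state_at al i = (inp, wrk, out)"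
    by (cases "state_at al i")
  obtain c inp' where c: "inp = c # inp'"
    and s2: "state_at al (Suc (Suc i)) = (inp', wrk, c # out)" and smaller: "\<forall>z \<in> set out. z < c"
    using peak_state[OF assms s] by (metis UnCI)
  have "Suc (Suc i) \<le> length al"
    using assms by (simp add: peak_def)
  then have "suffix (c # out) (produced al)"
    using suffix_output_state_at[of "Suc (Suc i)" "length al" al] s2 by (simp add: produced_state_at)
  then obtain pre where "produced al = pre @ c # out"
    by (auto simp: suffix_def)
  with smaller have "c \<in> rl_maxima (produced al)"
    unfolding rl_maxima_conv_split by blast
  then show ?thesis
    by (simp add: s c)
qed

lemma produced_element_popped:
  assumes "x \<in> set (produced al)"
  obtains t b inp wrk out where "t < length al" and "al ! t = Pop b"
    and "state_at al t = (inp, wrk, out)" and "x \<in> set (take b wrk)"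
proof -
  let ?P = "\<lambda>t. x \<in> set (output_stack (state_at al t))"
  have "?P (length al)" and "\<not> ?P 0"
    using assms by (simp_all add: produced_state_at state_at_0)
  then obtain t where t: "t < length al" and before: "\<not> ?P t" and after: "?P (Suc t)"
    using ex_least_nat_less[of ?P "length al"] by blast
  obtain inp wrk out where s: "state_at al t = (inp, wrk, out)"
    by (cases "state_at al t")
  show thesis
  proof (cases "al ! t")
    case (Push a)
    then have "output_stack (state_at al (Suc t)) = out"
      using state_at_Suc[OF t] s by simp
    with before after s show ?thesis
      by simp
  next
    case (Pop b)
    then have "output_stack (state_at al (Suc t)) = take b wrk @ out"
      using state_at_Suc[OF t] s by simp
    with before after s have "x \<in> set (take b wrk)"
      by simp
    with that t Pop s show ?thesis
      by blast
  qed
qed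

lemma last_push_before:
  assumes "x \<in> set (work_stack (state_at al t))" and "t \<le> length al"
  obtains s where "s < t" and "is_push (al ! s)" and "\<forall>k. s < k \<and> k < t \<longrightarrow> is_pop (al ! k)"
proof -
  let ?S = "{s. s < t \<and> is_push (al ! s)}"
  have nonempty: "?S \<noteq> {}"
  proof
    assume "?S = {}"
    then have "set (work_stack (state_at al t)) \<subseteq> set (work_stack (state_at al 0))"
      using assms(2) by (intro work_state_at_pops_subset) (auto simp: is_pop_iff_not_push)
    with assms(1) show False
      by (simp add: state_at_0)
  qed
  have finite: "finite ?S"
    by simp
  have "is_pop (al ! k)" if "Max ?S < k" and "k < t" for k
    using that Max_ge[OF finite, of k] by (fastforce simp: is_pop_iff_not_push)
  with Max_in[OF finite nonempty] show thesis
    using that by blast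
qed


lemma popped_below_peak_not_rl_maximum:
  assumes "peak al s" and le: "Suc (Suc s) \<le> t" and t: "t < length al"
    and pops: "\<forall>k. Suc (Suc s) \<le> k \<and> k < t \<longrightarrow> is_pop (al ! k)"
    and pop: "al ! t = Pop b" and st: "state_at al t = (inp, wrk, out)"
    and x: "x \<in> set (take b wrk)"
  shows "x \<notin> rl_maxima (produced al)"
proof
  assume rl: "x \<in> rl_maxima (produced al)"
  obtain inp0 wrk0 out0 where st0: "state_at al s = (inp0, wrk0, out0)"
    by (cases "state_at al s")
  obtain c inp' where s2: "state_at al (Suc (Suc s)) = (inp', wrk0, c # out0)"
    and larger: "\<forall>z \<in> set wrk0 \<union> set out0. z < c"
    by (rule peak_state[OF assms(1) st0])
  have "set (work_stack (state_at al t)) \<subseteq> set (work_stack (state_at al (Suc (Suc s))))"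
    using t pops by (intro work_state_at_pops_subset[OF le]) auto
  with x larger have "x < c"
    by (auto simp: st s2 dest: in_set_takeD)
  have "suffix (c # out0) out"
    using suffix_output_state_at[OF le, of al] st s2 by simp
  then have "c \<in> set out"
    by (auto simp: suffix_def)
  have "state_at al (Suc t) = (inp, drop b wrk, take b wrk @ out)"
    using state_at_Suc[OF t] st pop by simp
  then have "suffix (take b wrk @ out) (produced al)"
    using suffix_output_state_at[of "Suc t" "length al" al] t by (simp add: produced_state_at)
  then obtain pre where "produced al = (pre @ take b wrk) @ out"
    by (auto simp: suffix_def)
  then have "c < x"
    using rl_maxima_later_smaller[of "pre @ take b wrk" out x c] distinct_produced[of al]
      rl x \<open>c \<in> set out\<close> by simp
  with \<open>x < c\<close> show False
    by simp
qed

lemma rl_maximum_is_peak_element: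
  assumes "reduced al" and rl: "x \<in> rl_maxima (produced al)"
  shows "x \<in> peak_elements al"
proof -
  have "x \<in> set (produced al)"
    using rl by (auto simp: rl_maxima_def)
  then obtain t b inp wrk out where t: "t < length al" and pop: "al ! t = Pop b"
    and st: "state_at al t = (inp, wrk, out)" and x: "x \<in> set (take b wrk)"
    by (rule produced_element_popped)
  then have "x \<in> set (work_stack (state_at al t))"
    by (auto dest: in_set_takeD)
  then obtain s where "s < t" and push: "is_push (al ! s)"
    and pops: "\<forall>k. s < k \<and> k < t \<longrightarrow> is_pop (al ! k)"
    using t by (elim last_push_before) auto
  have "is_pop (al ! Suc s)"
    using pops pop \<open>s < t\<close> by (cases "Suc s = t") (auto simp: is_pop_def)
  then have pk: "peak al s"
    using assms(1) push \<open>s < t\<close> t unfolding reduced_def peak_def by auto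
  have "Suc s = t"
  proof (rule ccontr)
    assume "Suc s \<noteq> t"
    with \<open>s < t\<close> pops have "x \<notin> rl_maxima (produced al)"
      by (intro popped_below_peak_not_rl_maximum[OF pk _ t _ pop st x]) auto
    with rl show False
      by contradiction
  qed
  obtain inp0 wrk0 out0 where st0: "state_at al s = (inp0, wrk0, out0)"
    by (cases "state_at al s")
  obtain c inp' where "inp0 = c # inp'" and "state_at al (Suc s) = (inp', c # wrk0, out0)"
    by (rule peak_state[OF pk st0])
  with \<open>Suc s = t\<close> x pop pk st have "x = hd (input_stack (state_at al s))"
    by (simp add: st0 peak_def)
  with pk show ?thesis
    unfolding peak_elements_state_at by blast
qed

theorem mainTheorem8:
  fixes \<alpha> :: "op list" and n :: nat and \<pi> :: "nat list"
  assumes "well_formed \<alpha>" and "reduced \<alpha>" and "op_size \<alpha> = n"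
    and "\<pi> = produced \<alpha>"
  shows "peak_elements \<alpha> = rl_maxima \<pi>"
proof
  show "peak_elements \<alpha> \<subseteq> rl_maxima \<pi>"
    using peak_element_in_rl_maxima assms(4) by (auto simp: peak_elements_state_at)
  show "rl_maxima \<pi> \<subseteq> peak_elements \<alpha>"
    using rl_maximum_is_peak_element[OF assms(2)] assms(4) by blast
qed

end
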